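(* Let $d\ge 2$ and consider the non-linear diagonal network $f_1(\mathbf{x})=s(\mathbf{w}_1\odot\mathbf{x},\mathbf{b}_1)$, $f_2(\mathbf{x})=s(\mathbf{w}_2\odot f_1(\mathbf{x}),\mathbf{b}_2)$ with trainable $\mathbf{w}_1,\mathbf{w}_2,\mathbf{b}_1,\mathbf{b}_2\in\mathbb{R}^d$, trained by gradient flow on $\mathcal{L}_{CL}(f_2)$ for pretraining data with $\phi_1=\phi_2=1$, $\sigma=0$, $\alpha_1=0$, $\alpha_2=1$ (other $\phi_i>0$, $\alpha_i\in[0,1]$ arbitrary). Write $w_{lk}^{(t)}$ for the $k$-th entry of $\mathbf{w}_l$ at time $t$. Suppose that at initialization $\mathbf{b}_1^{(0)}=\mathbf{b}_2^{(0)}=(b_0,\dots,b_0)^\top$ with $b_0>0$, $|w_{22}^{(0)}|\le\sqrt{b_0}$ and $|w_{22}^{(0)}|(|w_{12}^{(0)}|-b_0)\ge b_0$. Then as $t\to\infty$, $\|f_2^{(t)}(\mathbf{e}_2)\|\to 0$, while $\liminf_{t\to\infty}\|f_1^{(t)}(\mathbf{e}_2)\|\ge\sqrt{b_0}$.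
   Context: $s(a,b)=\mathrm{ReLU}(a-b)-\mathrm{ReLU}(-a-b)$ is the symmetrized ReLU, applied entrywise to vectors; $\odot$ is the entrywise product. Pretraining distribution: $\mathbf{x}\in\mathbb{R}^d$ with independent coordinates $x_i$ uniform on $\{-\phi_i,\phi_i\}$. Augmentation $\mathcal{A}(\mathbf{x})$: for each $i$ independently, with probability $\alpha_i$ the sign of $x_i$ is re-randomized (uniform $\pm\phi_i$), otherwise kept; then noise of covariance $\sigma^2\mathbf{I}$ is added (here $\sigma=0$, so no noise). $\mathcal{L}_{CL}(f)=-2\,\mathbb{E}_{\mathbf{x},\,\mathbf{x}_1^+,\mathbf{x}_2^+\sim\mathcal{A}(\mathbf{x})}[f(\mathbf{x}_1^+)^\top f(\mathbf{x}_2^+)]+\mathbb{E}_{\mathbf{x}_1,\mathbf{x}_2\text{ i.i.d.}}[(f(\mathcal{A}(\mathbf{x}_1))^\top f(\mathcal{A}(\mathbf{x}_2)))^2]$, with independent augmentations. Gradient flow: $\frac{d}{dt}\theta^{(t)}=-\nabla_\theta\mathcal{L}_{CL}(f_2)$ for every parameter $\theta$ (with the standard a.e. derivative of ReLU). $\mathbf{e}_2$ is the second standard basis vector. *)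

theory Defs
  imports "HOL-Probability.Probability"
begin

(* Coordinates are indexed by nat, i < d; paper index i+1 corresponds to index i here. *)

definition relu :: "real \<Rightarrow> real" where "relu z = max z 0"

definition relu' :: "real \<Rightarrow> real" where "relu' z = (if z > 0 then 1 else 0)"

definition srelu :: "real \<Rightarrow> real \<Rightarrow> real" where
  "srelu a b = relu (a - b) - relu (- a - b)"
definition srelu_da :: "real \<Rightarrow> real \<Rightarrow> real" where
  "srelu_da a b = relu' (a - b) + relu' (- a - b)"
definition srelu_db :: "real \<Rightarrow> real \<Rightarrow> real" where
  "srelu_db a b = - relu' (a - b) + relu' (- a - b)"

datatype param = W1 | B1 | W2 | B2

type_synonym params = "param \<Rightarrow> nat \<Rightarrow> real"

definition f1 :: "params \<Rightarrow> (nat \<Rightarrow> real) \<Rightarrow> nat \<Rightarrow> real" where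
  "f1 \<theta> x k = srelu (\<theta> W1 k * x k) (\<theta> B1 k)"

definition f2 :: "params \<Rightarrow> (nat \<Rightarrow> real) \<Rightarrow> nat \<Rightarrow> real" where
  "f2 \<theta> x k = srelu (\<theta> W2 k * f1 \<theta> x k) (\<theta> B2 k)"

(* derivative of f_2(x)_k w.r.t. the k-th entry of parameter p (chain rule, ReLU' = indicator);
   f_2(x)_j does not depend on the k-th entries for j \<noteq> k *)
fun df2 :: "param \<Rightarrow> params \<Rightarrow> (nat \<Rightarrow> real) \<Rightarrow> nat \<Rightarrow> real" where
  "df2 W2 \<theta> x k = srelu_da (\<theta> W2 k * f1 \<theta> x k) (\<theta> B2 k) * f1 \<theta> x k"
| "df2 B2 \<theta> x k = srelu_db (\<theta> W2 k * f1 \<theta> x k) (\<theta> B2 k)"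
| "df2 W1 \<theta> x k = srelu_da (\<theta> W2 k * f1 \<theta> x k) (\<theta> B2 k) * \<theta> W2 k
                       * srelu_da (\<theta> W1 k * x k) (\<theta> B1 k) * x k"
| "df2 B1 \<theta> x k = srelu_da (\<theta> W2 k * f1 \<theta> x k) (\<theta> B2 k) * \<theta> W2 k
                       * srelu_db (\<theta> W1 k * x k) (\<theta> B1 k)"

definition data_pmf :: "nat \<Rightarrow> (nat \<Rightarrow> real) \<Rightarrow> (nat \<Rightarrow> real) pmf" where
  "data_pmf d \<phi> = Pi_pmf {..<d} 0 (\<lambda>i. pmf_of_set {- \<phi> i, \<phi> i})"

(* augmentation with sigma = 0: with prob. alpha_i re-randomize the sign of x_i, else keep *)
definition aug_pmf :: "nat \<Rightarrow> (nat \<Rightarrow> real) \<Rightarrow> (nat \<Rightarrow> real) \<Rightarrow> (nat \<Rightarrow> real) \<Rightarrow> (nat \<Rightarrow> real) pmf" where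
  "aug_pmf d \<alpha> \<phi> x = Pi_pmf {..<d} 0 (\<lambda>i. bind_pmf (bernoulli_pmf (\<alpha> i))
        (\<lambda>c. if c then pmf_of_set {- \<phi> i, \<phi> i} else return_pmf (x i)))"

definition pos_pmf :: "nat \<Rightarrow> (nat \<Rightarrow> real) \<Rightarrow> (nat \<Rightarrow> real) \<Rightarrow> ((nat \<Rightarrow> real) \<times> (nat \<Rightarrow> real)) pmf" where
  "pos_pmf d \<alpha> \<phi> = bind_pmf (data_pmf d \<phi>) (\<lambda>x.
      bind_pmf (aug_pmf d \<alpha> \<phi> x) (\<lambda>y1. bind_pmf (aug_pmf d \<alpha> \<phi> x) (\<lambda>y2. return_pmf (y1, y2))))"

definition neg_pmf :: "nat \<Rightarrow> (nat \<Rightarrow> real) \<Rightarrow> (nat \<Rightarrow> real) \<Rightarrow> ((nat \<Rightarrow> real) \<times> (nat \<Rightarrow> real)) pmf" where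
  "neg_pmf d \<alpha> \<phi> = bind_pmf (data_pmf d \<phi>) (\<lambda>x1. bind_pmf (data_pmf d \<phi>) (\<lambda>x2.
      bind_pmf (aug_pmf d \<alpha> \<phi> x1) (\<lambda>z1. bind_pmf (aug_pmf d \<alpha> \<phi> x2) (\<lambda>z2. return_pmf (z1, z2)))))"

definition inner_d :: "nat \<Rightarrow> (nat \<Rightarrow> real) \<Rightarrow> (nat \<Rightarrow> real) \<Rightarrow> real" where
  "inner_d d u v = (\<Sum>j<d. u j * v j)"

definition norm_d :: "nat \<Rightarrow> (nat \<Rightarrow> real) \<Rightarrow> real" where
  "norm_d d u = sqrt (\<Sum>j<d. (u j)\<^sup>2)"

definition loss_CL :: "nat \<Rightarrow> (nat \<Rightarrow> real) \<Rightarrow> (nat \<Rightarrow> real) \<Rightarrow> params \<Rightarrow> real" where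
  "loss_CL d \<alpha> \<phi> \<theta> =
     - 2 * measure_pmf.expectation (pos_pmf d \<alpha> \<phi>) (\<lambda>(y1, y2). inner_d d (f2 \<theta> y1) (f2 \<theta> y2))
     + measure_pmf.expectation (neg_pmf d \<alpha> \<phi>) (\<lambda>(z1, z2). (inner_d d (f2 \<theta> z1) (f2 \<theta> z2))\<^sup>2)"

(* partial derivative of L_CL(f_2) w.r.t. the k-th entry of parameter p,
   computed by the chain rule inside the expectations with ReLU'(z) = [z > 0] *)
definition grad_CL :: "nat \<Rightarrow> (nat \<Rightarrow> real) \<Rightarrow> (nat \<Rightarrow> real) \<Rightarrow> params \<Rightarrow> param \<Rightarrow> nat \<Rightarrow> real" where
  "grad_CL d \<alpha> \<phi> \<theta> p k =
     - 2 * measure_pmf.expectation (pos_pmf d \<alpha> \<phi>)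
           (\<lambda>(y1, y2). df2 p \<theta> y1 k * f2 \<theta> y2 k + f2 \<theta> y1 k * df2 p \<theta> y2 k)
     + measure_pmf.expectation (neg_pmf d \<alpha> \<phi>)
           (\<lambda>(z1, z2). 2 * inner_d d (f2 \<theta> z1) (f2 \<theta> z2)
                        * (df2 p \<theta> z1 k * f2 \<theta> z2 k + f2 \<theta> z1 k * df2 p \<theta> z2 k))"

(* e_2 (paper indexing) = indicator of index 1 here *)
definition e2 :: "nat \<Rightarrow> real" where "e2 = (\<lambda>j. if j = 1 then 1 else 0)"

end

theory Submission
  imports Defs
begin

text \<open>Since \<open>\<alpha>\<^sub>2 = 1\<close>, the second coordinate of every augmented view is an independent
uniform sign, and \<open>f\<^sub>2\<close> is odd in that coordinate. Hence in the gradient with respect to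
the second-coordinate parameters the positive-pair term vanishes and the negative-pair term
collapses to \<open>4 F\<^sup>3 \<partial>F\<close>, where \<open>F = f\<^sub>2(e\<^sub>2)\<^sub>2\<close>. While \<open>b\<^sub>1\<^sub>2, b\<^sub>2\<^sub>2 > 0\<close>,
\<open>|w\<^sub>1\<^sub>2| > b\<^sub>1\<^sub>2\<close> and \<open>w\<^sub>2\<^sub>2 \<noteq> 0\<close>, this is an explicit four-dimensional ODE along which
both biases grow, \<open>|w\<^sub>2\<^sub>2|\<close> shrinks, and the margin
\<open>\<Phi> = |w\<^sub>2\<^sub>2| (|w\<^sub>1\<^sub>2| - b\<^sub>1\<^sub>2) - b\<^sub>2\<^sub>2\<close> satisfies \<open>\<Phi>' \<le> -4 \<Phi>\<^sup>3\<close> while positive and is frozen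
at 0. So \<open>b \<ge> b\<^sub>0\<close>, \<open>|w\<^sub>2\<^sub>2| \<le> \<surd>b\<^sub>0\<close> and \<open>\<Phi> \<ge> 0\<close> persist, which forces
\<open>|f\<^sub>1(e\<^sub>2)| = |w\<^sub>1\<^sub>2| - b\<^sub>1\<^sub>2 \<ge> \<surd>b\<^sub>0\<close> forever, while \<open>|f\<^sub>2(e\<^sub>2)| = \<Phi>\<close> decays to 0.\<close>

section \<open>Real functions of time\<close>

lemma has_real_derivative_abs:
  fixes f :: "real \<Rightarrow> real"
  assumes "(f has_real_derivative D) (at t)" "f t \<noteq> 0"
  shows "((\<lambda>s. \<bar>f s\<bar>) has_real_derivative sgn (f t) * D) (at t)"
proof -
  have "((\<lambda>x. \<bar>x\<bar>) has_real_derivative sgn y) (at y)" if "y \<noteq> 0" for y :: real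
  proof (cases "0 < y")
    case True
    have "((\<lambda>x. x) has_real_derivative 1) (at y)"
      by (rule DERIV_ident)
    then show ?thesis
      using True by (rule_tac has_field_derivative_transform_within_open[where S = "{0<..}"]) auto
  next
    case False
    have "((\<lambda>x. - x) has_real_derivative -1) (at y)"
      by (auto intro!: derivative_eq_intros)
    then show ?thesis
      using False that
      by (rule_tac has_field_derivative_transform_within_open[where S = "{..<0}"]) auto
  qed
  from DERIV_chain2[OF this[OF assms(2)] assms(1)] show ?thesis
    by simp
qed

lemma nonneg_barrier:
  fixes f f' :: "real \<Rightarrow> real"
  assumes "a \<le> b" and cont: "continuous_on {a..b} f"
    and deriv: "\<And>x. a < x \<Longrightarrow> x < b \<Longrightarrow> (f has_real_derivative f' x) (at x)"
    and flat: "\<And>x. a < x \<Longrightarrow> x < b \<Longrightarrow> f x < 0 \<Longrightarrow> f' x = 0"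
    and "0 \<le> f a"
  shows "0 \<le> f b"
proof (rule ccontr)
  assume "\<not> 0 \<le> f b"
  define S where "S = {x \<in> {a..b}. 0 \<le> f x}"
  have "closed S"
    unfolding S_def by (rule continuous_on_closed_Collect_le) (auto intro: cont)
  moreover have "S \<noteq> {}" "bdd_above S"
    using assms by (auto simp: S_def bdd_above_def)
  ultimately have "Sup S \<in> S"
    by (rule closed_contains_Sup[rotated -1])
  define s where "s = Sup S"
  have s: "a \<le> s" "s < b" "0 \<le> f s"
    using \<open>Sup S \<in> S\<close> \<open>\<not> 0 \<le> f b\<close> by (auto simp: S_def s_def order.order_iff_strict)
  \<comment> \<open>On (s, b] the function is negative, so it is constant there.\<close>
  have "f x < 0" if "s < x" "x \<le> b" for x
    using cSup_upper[OF _ \<open>bdd_above S\<close>, of x] that s by (force simp: S_def s_def)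
  then have "(f has_real_derivative 0) (at x)" if "s < x" "x < b" for x
    using deriv[of x] flat[of x] that s by auto
  moreover have "continuous_on {s..b} f"
    by (rule continuous_on_subset[OF cont]) (use s in auto)
  ultimately have "f b = f s"
    using DERIV_isconst_end[OF \<open>s < b\<close>] by blast
  then show False
    using s \<open>\<not> 0 \<le> f b\<close> by simp
qed

lemma positive_continuation:
  fixes m :: "real \<Rightarrow> real"
  assumes cont: "continuous_on {0..} m"
    and step: "\<And>c. 0 \<le> c \<Longrightarrow> (\<And>s. 0 \<le> s \<Longrightarrow> s < c \<Longrightarrow> 0 < m s) \<Longrightarrow> 0 < m c"
    and "0 \<le> t"
  shows "0 < m t"
proof (rule ccontr)
  define X where "X = {t. 0 \<le> t \<and> m t \<le> 0}"
  assume "\<not> 0 < m t"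
  then have "X \<noteq> {}"
    using \<open>0 \<le> t\<close> by (auto simp: X_def)
  have "bdd_below X"
    by (auto simp: X_def bdd_below_def)
  define T where "T = Inf X"
  have "0 \<le> T"
    unfolding T_def using \<open>X \<noteq> {}\<close> by (rule cInf_greatest) (auto simp: X_def)
  have below: "0 < m s" if "0 \<le> s" "s < T" for s
    using cInf_lower[OF _ \<open>bdd_below X\<close>, of s] that by (force simp: X_def T_def)
  then have "0 < m T"
    using step \<open>0 \<le> T\<close> by blast
  then obtain \<delta> where "0 < \<delta>" and \<delta>: "\<And>x. 0 \<le> x \<Longrightarrow> dist x T < \<delta> \<Longrightarrow> dist (m x) (m T) < m T"
    using cont \<open>0 \<le> T\<close> unfolding continuous_on_iff by (meson atLeast_iff)
  have "T + \<delta> \<le> Inf X"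
  proof (rule cInf_greatest[OF \<open>X \<noteq> {}\<close>])
    fix x assume "x \<in> X"
    show "T + \<delta> \<le> x"
    proof (rule ccontr)
      assume "\<not> T + \<delta> \<le> x"
      then have "0 < m x"
        using below[of x] \<delta>[of x] \<open>x \<in> X\<close> by (cases "x < T") (auto simp: X_def dist_real_def)
      then show False
        using \<open>x \<in> X\<close> by (simp add: X_def)
    qed
  qed
  then show False
    using \<open>0 < \<delta>\<close> by (simp add: T_def)
qed

lemma tendsto_zero_if_deriv_le_neg_power:
  fixes f f' :: "real \<Rightarrow> real"
  assumes cont: "continuous_on {0..} f"
    and deriv: "\<And>t. 0 < t \<Longrightarrow> (f has_real_derivative f' t) (at t)"
    and nonneg: "\<And>t. 0 \<le> t \<Longrightarrow> 0 \<le> f t"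
    and decay: "\<And>t. 0 < t \<Longrightarrow> f' t \<le> - (f t ^ n)"
  shows "(f \<longlongrightarrow> 0) at_top"
proof (rule order_tendstoI)
  have antimono: "f y \<le> f x" if "0 \<le> x" "x \<le> y" for x y
  proof (rule DERIV_nonpos_imp_decreasing_open[OF \<open>x \<le> y\<close>])
    fix z assume "x < z" "z < y"
    then show "\<exists>l. (f has_real_derivative l) (at z) \<and> l \<le> 0"
      using that deriv[of z] decay[of z] zero_le_power[OF nonneg[of z], of n]
      by (intro exI[of _ "f' z"]) auto
  qed (use that continuous_on_subset[OF cont, of "{x..y}"] in auto)
  fix \<epsilon> :: real assume "0 < \<epsilon>"
  define T where "T = f 0 / \<epsilon> ^ n + 1"
  have "0 < T"
    using \<open>0 < \<epsilon>\<close> nonneg[of 0] by (simp add: T_def add_nonneg_pos)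
  have "f T < \<epsilon>"
  proof (rule ccontr)
    assume "\<not> f T < \<epsilon>"
    obtain l z where z: "0 < z" "z < T" "(f has_real_derivative l) (at z)" "f T - f 0 = (T - 0) * l"
      using MVT[OF \<open>0 < T\<close> continuous_on_subset[OF cont, of "{0..T}"]] deriv
        real_differentiable_def by (meson atLeastAtMost_iff atLeast_iff subsetI)
    then have "l = f' z"
      using DERIV_unique deriv by blast
    \<comment> \<open>Along [0, T] the function stays above \<open>\<epsilon>\<close>, so it loses at least \<open>\<epsilon> ^ n\<close> per unit time.\<close>
    have "\<epsilon> ^ n \<le> f z ^ n"
      using antimono[of z T] z \<open>\<not> f T < \<epsilon>\<close> \<open>0 < \<epsilon>\<close> by (intro power_mono) auto
    then have "T * l \<le> T * - (\<epsilon> ^ n)"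
      using decay[of z] z \<open>0 < T\<close> \<open>l = f' z\<close> by (intro mult_left_mono) auto
    also have "\<dots> = - f 0 - \<epsilon> ^ n"
      using \<open>0 < \<epsilon>\<close> by (simp add: T_def field_simps)
    finally show False
      using z \<open>\<not> f T < \<epsilon>\<close> \<open>0 < \<epsilon>\<close> by (smt (verit) zero_less_power)
  qed
  then have "f t < \<epsilon>" if "T \<le> t" for t
    using antimono[of T t] \<open>0 < T\<close> that by linarith
  then show "\<forall>\<^sub>F t in at_top. f t < \<epsilon>"
    unfolding eventually_at_top_linorder by blast
next
  fix a :: real assume "a < 0"
  then show "\<forall>\<^sub>F t in at_top. a < f t"
    using nonneg by (intro eventually_mono[OF eventually_ge_at_top[of 0]]) (auto intro: less_le_trans)
qed

section \<open>Sign symmetry of a fully resampled coordinate\<close>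

definition flip_coord :: "nat \<Rightarrow> (nat \<Rightarrow> real) \<Rightarrow> nat \<Rightarrow> real" where
  "flip_coord i z = z(i := - z i)"

lemma flip_coord_flip_coord [simp]: "flip_coord i (flip_coord i z) = z"
  by (simp add: flip_coord_def fun_eq_iff)

lemma flip_coord_same [simp]: "flip_coord i z i = - z i"
  by (simp add: flip_coord_def)

lemma flip_coord_other [simp]: "j \<noteq> i \<Longrightarrow> flip_coord i z j = z j"
  by (simp add: flip_coord_def)

lemma resampled_coord_pmf:
  assumes "\<alpha> i = 1"
  shows "bind_pmf (bernoulli_pmf (\<alpha> i))
           (\<lambda>c. if c then pmf_of_set {- \<phi> i, \<phi> i} else return_pmf (x i))
         = pmf_of_set {- \<phi> i, \<phi> i}"
proof -
  have "bernoulli_pmf 1 = return_pmf True"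
    by (rule pmf_eqI) (auto simp: indicator_def)
  then show ?thesis using assms by (simp add: bind_return_pmf)
qed

lemma map_pmf_flip_coord_aug_pmf:
  assumes "\<alpha> i = 1"
  shows "map_pmf (flip_coord i) (aug_pmf d \<alpha> \<phi> x) = aug_pmf d \<alpha> \<phi> x"
proof (rule pmf_eqI)
  fix z
  let ?comp = "\<lambda>j. bind_pmf (bernoulli_pmf (\<alpha> j))
                 (\<lambda>c. if c then pmf_of_set {- \<phi> j, \<phi> j} else return_pmf (x j))"
  have "pmf (?comp j) (flip_coord i z j) = pmf (?comp j) (z j)" for j
    using resampled_coord_pmf[of \<alpha> i \<phi> x, OF assms]
    by (cases "j = i") (auto simp: indicator_def)
  then have prod: "(\<Prod>j<d. pmf (?comp j) (flip_coord i z j)) = (\<Prod>j<d. pmf (?comp j) (z j))"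
    by simp
  have outside: "(\<forall>j. j \<notin> {..<d} \<longrightarrow> flip_coord i z j = 0) \<longleftrightarrow> (\<forall>j. j \<notin> {..<d} \<longrightarrow> z j = 0)"
    by (metis flip_coord_other flip_coord_same neg_equal_0_iff_equal)
  have "pmf (aug_pmf d \<alpha> \<phi> x) (flip_coord i z) = pmf (aug_pmf d \<alpha> \<phi> x) z"
    unfolding aug_pmf_def pmf_Pi[OF finite_lessThan] outside prod ..
  then show "pmf (map_pmf (flip_coord i) (aug_pmf d \<alpha> \<phi> x)) z = pmf (aug_pmf d \<alpha> \<phi> x) z"
    by (metis flip_coord_flip_coord injI pmf_map_inj')
qed

lemma aug_pmf_resampled_coord:
  assumes "\<alpha> i = 1" "i < d" "z \<in> set_pmf (aug_pmf d \<alpha> \<phi> x)"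
  shows "z i \<in> {- \<phi> i, \<phi> i}"
proof -
  have "z i \<in> set_pmf (map_pmf (\<lambda>f. f i) (aug_pmf d \<alpha> \<phi> x))"
    using assms(3) by auto
  also have "map_pmf (\<lambda>f. f i) (aug_pmf d \<alpha> \<phi> x) = pmf_of_set {- \<phi> i, \<phi> i}"
    unfolding aug_pmf_def Pi_pmf_component[OF finite_lessThan]
    using assms resampled_coord_pmf[of \<alpha> i \<phi> x] by simp
  finally show ?thesis by auto
qed

lemma finite_set_aug_pmf: "finite (set_pmf (aug_pmf d \<alpha> \<phi> x))"
proof (rule finite_subset)
  show "set_pmf (aug_pmf d \<alpha> \<phi> x) \<subseteq> PiE_dflt {..<d} 0 (\<lambda>i. {- \<phi> i, \<phi> i, x i})"
    unfolding aug_pmf_def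
    by (rule order_trans[OF set_Pi_pmf_subset'[OF finite_lessThan]])
       (auto simp: PiE_dflt_def split: if_splits)
qed auto

lemma finite_set_data_pmf: "finite (set_pmf (data_pmf d \<phi>))"
proof (rule finite_subset)
  show "set_pmf (data_pmf d \<phi>) \<subseteq> PiE_dflt {..<d} 0 (\<lambda>i. {- \<phi> i, \<phi> i})"
    unfolding data_pmf_def
    by (rule order_trans[OF set_Pi_pmf_subset'[OF finite_lessThan]]) (auto simp: PiE_dflt_def)
qed auto

lemma finite_set_neg_pmf: "finite (set_pmf (neg_pmf d \<alpha> \<phi>))"
  unfolding neg_pmf_def by (simp add: finite_set_data_pmf finite_set_aug_pmf)

lemma bind_aug_pmf_flip_coord:
  assumes "\<alpha> i = 1"
  shows "bind_pmf (aug_pmf d \<alpha> \<phi> x) (\<lambda>y. return_pmf (u, flip_coord i y))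
       = bind_pmf (aug_pmf d \<alpha> \<phi> x) (\<lambda>y. return_pmf (u, y))"
proof -
  have "bind_pmf (aug_pmf d \<alpha> \<phi> x) (\<lambda>y. return_pmf (u, flip_coord i y))
      = bind_pmf (map_pmf (flip_coord i) (aug_pmf d \<alpha> \<phi> x)) (\<lambda>y. return_pmf (u, y))"
    by (simp add: bind_map_pmf)
  then show ?thesis
    by (simp add: map_pmf_flip_coord_aug_pmf[where \<alpha> = \<alpha>, OF assms])
qed

lemma map_pmf_apsnd_flip_coord_pos_pmf:
  assumes "\<alpha> i = 1"
  shows "map_pmf (apsnd (flip_coord i)) (pos_pmf d \<alpha> \<phi>) = pos_pmf d \<alpha> \<phi>"
  unfolding pos_pmf_def
  by (simp add: map_bind_pmf bind_aug_pmf_flip_coord[where \<alpha> = \<alpha>, OF assms])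

lemma map_pmf_apsnd_flip_coord_neg_pmf:
  assumes "\<alpha> i = 1"
  shows "map_pmf (apsnd (flip_coord i)) (neg_pmf d \<alpha> \<phi>) = neg_pmf d \<alpha> \<phi>"
  unfolding neg_pmf_def
  by (simp add: map_bind_pmf bind_aug_pmf_flip_coord[where \<alpha> = \<alpha>, OF assms])

lemma srelu_minus_left: "srelu (- a) b = - srelu a b"
  by (simp add: srelu_def)

lemma srelu_da_minus_left: "srelu_da (- a) b = srelu_da a b"
  by (simp add: srelu_da_def)

lemma srelu_db_minus_left: "srelu_db (- a) b = - srelu_db a b"
  by (simp add: srelu_db_def)

lemma f1_flip_coord_same: "f1 \<theta> (flip_coord i z) i = - f1 \<theta> z i"
  by (simp add: f1_def srelu_minus_left)

lemma f2_flip_coord_same: "f2 \<theta> (flip_coord i z) i = - f2 \<theta> z i"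
  by (simp add: f2_def f1_flip_coord_same srelu_minus_left)

lemma f2_flip_coord_other: "j \<noteq> i \<Longrightarrow> f2 \<theta> (flip_coord i z) j = f2 \<theta> z j"
  by (simp add: f2_def f1_def)

lemma df2_flip_coord_same: "df2 p \<theta> (flip_coord i z) i = - df2 p \<theta> z i"
  by (cases p) (simp_all add: f1_flip_coord_same srelu_da_minus_left srelu_db_minus_left)

lemma f2_sign_coord:
  assumes "z i \<in> {-1, 1}"
  shows "f2 \<theta> z i = z i * f2 \<theta> (indicator {i}) i"
  using assms by (auto simp: f2_def f1_def srelu_minus_left)

lemma df2_sign_coord:
  assumes "z i \<in> {-1, 1}"
  shows "df2 p \<theta> z i = z i * df2 p \<theta> (indicator {i}) i"
  using assms
  by (cases p) (auto simp: f1_def srelu_minus_left srelu_da_minus_left srelu_db_minus_left)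

lemma expectation_odd_eq_0:
  fixes h :: "'a \<Rightarrow> real"
  assumes "map_pmf \<tau> M = M" "\<And>x. x \<in> set_pmf M \<Longrightarrow> h (\<tau> x) = - h x"
  shows "measure_pmf.expectation M h = 0"
proof -
  have "measure_pmf.expectation M h = measure_pmf.expectation (map_pmf \<tau> M) h"
    using assms(1) by simp
  also have "\<dots> = measure_pmf.expectation M (\<lambda>x. h (\<tau> x))"
    by simp
  also have "\<dots> = measure_pmf.expectation M (\<lambda>x. - h x)"
    by (rule integral_cong_AE) (auto simp: AE_measure_pmf_iff assms(2))
  finally show ?thesis by simp
qed

lemma grad_CL_resampled_coord:
  assumes "\<alpha> i = 1" "\<phi> i = 1" "i < d"
  shows "grad_CL d \<alpha> \<phi> \<theta> p i
       = 4 * (f2 \<theta> (indicator {i}) i) ^ 3 * df2 p \<theta> (indicator {i}) i"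
proof -
  define F where "F = f2 \<theta> (indicator {i}) i"
  define D where "D = df2 p \<theta> (indicator {i}) i"
  have pos: "measure_pmf.expectation (pos_pmf d \<alpha> \<phi>)
      (\<lambda>(y1, y2). df2 p \<theta> y1 i * f2 \<theta> y2 i + f2 \<theta> y1 i * df2 p \<theta> y2 i) = 0"
    by (rule expectation_odd_eq_0[OF map_pmf_apsnd_flip_coord_pos_pmf[where \<alpha> = \<alpha>, OF assms(1)]])
       (auto simp: f2_flip_coord_same df2_flip_coord_same algebra_simps)
  define N where "N = (\<lambda>(z1, z2). 2 * inner_d d (f2 \<theta> z1) (f2 \<theta> z2)
                        * (df2 p \<theta> z1 i * f2 \<theta> z2 i + f2 \<theta> z1 i * df2 p \<theta> z2 i))"
  have inner_d_split: "inner_d d u v = u i * v i + (\<Sum>j\<in>{..<d} - {i}. u j * v j)" for u v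
    unfolding inner_d_def using assms(3) by (simp add: sum.remove)
  \<comment> \<open>Only the coordinate-i term of the inner product survives: the other terms change sign
      when the second view's coordinate i is flipped.\<close>
  have "measure_pmf.expectation (neg_pmf d \<alpha> \<phi>) (\<lambda>z. N z - 4 * F ^ 3 * D) = 0"
  proof (rule expectation_odd_eq_0[OF map_pmf_apsnd_flip_coord_neg_pmf[where \<alpha> = \<alpha>, OF assms(1)]])
    fix z assume "z \<in> set_pmf (neg_pmf d \<alpha> \<phi>)"
    then obtain z1 z2 x1 x2 where z: "z = (z1, z2)"
      and "z1 \<in> set_pmf (aug_pmf d \<alpha> \<phi> x1)" "z2 \<in> set_pmf (aug_pmf d \<alpha> \<phi> x2)"
      unfolding neg_pmf_def by auto
    then have s1: "z1 i \<in> {-1, 1}" and s2: "z2 i \<in> {-1, 1}"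
      using aug_pmf_resampled_coord[of \<alpha> i d _ \<phi>] assms by metis+
    then have s2': "flip_coord i z2 i \<in> {-1, 1}" by auto
    define A where "A = (\<Sum>j\<in>{..<d} - {i}. f2 \<theta> z1 j * f2 \<theta> z2 j)"
    have A: "(\<Sum>j\<in>{..<d} - {i}. f2 \<theta> z1 j * f2 \<theta> (flip_coord i z2) j) = A"
      unfolding A_def by (rule sum.cong) (auto simp: f2_flip_coord_other)
    show "N (apsnd (flip_coord i) z) - 4 * F ^ 3 * D = - (N z - 4 * F ^ 3 * D)"
      unfolding N_def z apsnd_conv prod.case inner_d_split A A_def[symmetric]
        f2_sign_coord[of z1, OF s1] f2_sign_coord[of z2, OF s2]
        f2_sign_coord[of "flip_coord i z2", OF s2'] df2_sign_coord[of z1, OF s1]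
        df2_sign_coord[of z2, OF s2] df2_sign_coord[of "flip_coord i z2", OF s2']
        F_def[symmetric] D_def[symmetric] flip_coord_same
      using s1 s2 by (auto simp: algebra_simps power3_eq_cube)
  qed
  moreover have "integrable (measure_pmf (neg_pmf d \<alpha> \<phi>)) N"
    by (rule integrable_measure_pmf_finite[OF finite_set_neg_pmf])
  ultimately have "measure_pmf.expectation (neg_pmf d \<alpha> \<phi>) N = 4 * F ^ 3 * D"
    by simp
  then show ?thesis
    unfolding grad_CL_def pos by (simp add: N_def F_def D_def)
qed

section \<open>The network in its active region\<close>

definition active :: "real \<Rightarrow> real \<Rightarrow> real \<Rightarrow> real \<Rightarrow> bool" where
  "active w1 b1 w2 b2 \<longleftrightarrow> 0 < b1 \<and> 0 < b2 \<and> b1 < \<bar>w1\<bar> \<and> w2 \<noteq> 0"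

definition margin :: "real \<Rightarrow> real \<Rightarrow> real \<Rightarrow> real \<Rightarrow> real" where
  "margin w1 b1 w2 b2 = \<bar>w2\<bar> * (\<bar>w1\<bar> - b1) - b2"

lemma srelu_pos_bias: "0 < b \<Longrightarrow> srelu a b = sgn a * relu (\<bar>a\<bar> - b)"
  by (auto simp: srelu_def relu_def sgn_if max_def)

lemma srelu_da_pos_bias: "0 < b \<Longrightarrow> srelu_da a b = (if b < \<bar>a\<bar> then 1 else 0)"
  by (auto simp: srelu_da_def relu'_def)

lemma srelu_db_pos_bias: "0 < b \<Longrightarrow> srelu_db a b = (if b < \<bar>a\<bar> then - sgn a else 0)"
  by (auto simp: srelu_db_def relu'_def)

lemma srelu_composition_active:
  assumes "active w1 b1 w2 b2"
  defines "h \<equiv> srelu w1 b1" and "F \<equiv> srelu (w2 * srelu w1 b1) b2"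
    and "m \<equiv> relu (margin w1 b1 w2 b2)"
  shows "h = sgn w1 * (\<bar>w1\<bar> - b1)"
    and "F = sgn w2 * sgn w1 * m"
    and "F ^ 3 * (srelu_da (w2 * h) b2 * h) = sgn w2 * m ^ 3 * (\<bar>w1\<bar> - b1)"
    and "F ^ 3 * srelu_db (w2 * h) b2 = - (m ^ 3)"
    and "F ^ 3 * (srelu_da (w2 * h) b2 * w2 * srelu_da w1 b1) = sgn w1 * m ^ 3 * \<bar>w2\<bar>"
    and "F ^ 3 * (srelu_da (w2 * h) b2 * w2 * srelu_db w1 b1) = - (m ^ 3 * \<bar>w2\<bar>)"
proof -
  have pos: "0 < b1" "0 < b2" "b1 < \<bar>w1\<bar>" "w2 \<noteq> 0"
    using assms(1) by (auto simp: active_def)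
  have sgn1: "sgn w1 * sgn w1 = 1" and sgn2: "sgn w2 * sgn w2 = 1"
    using pos by (auto simp: sgn_if)
  show h: "h = sgn w1 * (\<bar>w1\<bar> - b1)"
    using pos by (simp add: h_def srelu_pos_bias relu_def)
  have abs_arg: "\<bar>w2 * h\<bar> = \<bar>w2\<bar> * (\<bar>w1\<bar> - b1)" and sgn_arg: "sgn (w2 * h) = sgn w2 * sgn w1"
    using pos by (auto simp: h abs_mult sgn_mult abs_sgn_eq)
  have m: "m = relu (\<bar>w2 * h\<bar> - b2)"
    by (simp add: m_def margin_def abs_arg)
  show F: "F = sgn w2 * sgn w1 * m"
    using pos by (simp add: F_def h_def[symmetric] srelu_pos_bias sgn_arg m)
  have F3: "F ^ 3 = sgn w2 * sgn w1 * m ^ 3"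
    unfolding F power_mult_distrib
    by (metis sgn1 sgn2 mult_1 power3_eq_cube mult.assoc mult.commute)
  have da: "srelu_da (w2 * h) b2 = (if 0 < m then 1 else 0)"
    and db: "srelu_db (w2 * h) b2 = (if 0 < m then - (sgn w2 * sgn w1) else 0)"
    using pos by (auto simp: srelu_da_pos_bias srelu_db_pos_bias sgn_arg m relu_def)
  have da1: "srelu_da w1 b1 = 1" and db1: "srelu_db w1 b1 = - sgn w1"
    using pos by (auto simp: srelu_da_pos_bias srelu_db_pos_bias)
  have m_nonneg: "0 \<le> m"
    by (simp add: m_def relu_def)
  have w2: "w2 = sgn w2 * \<bar>w2\<bar>"
    by (simp add: sgn_mult_abs)
  show "F ^ 3 * (srelu_da (w2 * h) b2 * h) = sgn w2 * m ^ 3 * (\<bar>w1\<bar> - b1)"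
    unfolding F3 da unfolding h using sgn1 m_nonneg by (auto simp: algebra_simps)
  show "F ^ 3 * srelu_db (w2 * h) b2 = - (m ^ 3)"
    unfolding F3 db using sgn1 sgn2 m_nonneg by (auto simp: algebra_simps)
  show "F ^ 3 * (srelu_da (w2 * h) b2 * w2 * srelu_da w1 b1) = sgn w1 * m ^ 3 * \<bar>w2\<bar>"
    unfolding F3 da da1 using sgn1 sgn2 m_nonneg by (subst (2) w2) (auto simp: algebra_simps)
  show "F ^ 3 * (srelu_da (w2 * h) b2 * w2 * srelu_db w1 b1) = - (m ^ 3 * \<bar>w2\<bar>)"
    unfolding F3 da db1 using sgn1 sgn2 m_nonneg by (subst (2) w2) (auto simp: algebra_simps)
qed

lemma unit_response_active:
  fixes \<theta> :: params
  assumes "active (\<theta> W1 i) (\<theta> B1 i) (\<theta> W2 i) (\<theta> B2 i)"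
  defines "e \<equiv> indicator {i}" and "m \<equiv> relu (margin (\<theta> W1 i) (\<theta> B1 i) (\<theta> W2 i) (\<theta> B2 i))"
  shows "\<bar>f1 \<theta> e i\<bar> = \<bar>\<theta> W1 i\<bar> - \<theta> B1 i"
    and "\<bar>f2 \<theta> e i\<bar> = m"
    and "4 * f2 \<theta> e i ^ 3 * df2 W1 \<theta> e i = 4 * sgn (\<theta> W1 i) * m ^ 3 * \<bar>\<theta> W2 i\<bar>"
    and "4 * f2 \<theta> e i ^ 3 * df2 B1 \<theta> e i = - 4 * m ^ 3 * \<bar>\<theta> W2 i\<bar>"
    and "4 * f2 \<theta> e i ^ 3 * df2 W2 \<theta> e i = 4 * sgn (\<theta> W2 i) * m ^ 3 * (\<bar>\<theta> W1 i\<bar> - \<theta> B1 i)"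
    and "4 * f2 \<theta> e i ^ 3 * df2 B2 \<theta> e i = - 4 * m ^ 3"
proof -
  note composition = srelu_composition_active[OF assms(1), folded m_def]
  have pos: "0 < \<theta> B1 i" "\<theta> B1 i < \<bar>\<theta> W1 i\<bar>" "\<theta> W1 i \<noteq> 0" "\<theta> W2 i \<noteq> 0"
    using assms(1) by (auto simp: active_def)
  have f1: "f1 \<theta> e i = srelu (\<theta> W1 i) (\<theta> B1 i)"
    by (simp add: f1_def e_def)
  have f2: "f2 \<theta> e i = srelu (\<theta> W2 i * srelu (\<theta> W1 i) (\<theta> B1 i)) (\<theta> B2 i)"
    by (simp add: f2_def f1)
  have e: "e i = 1"
    by (simp add: e_def)
  have cube: "4 * a ^ 3 * b = 4 * (a ^ 3 * b)" for a b :: real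
    by simp
  show "\<bar>f1 \<theta> e i\<bar> = \<bar>\<theta> W1 i\<bar> - \<theta> B1 i"
    using pos by (simp add: f1 composition(1) abs_mult abs_sgn_eq)
  show "\<bar>f2 \<theta> e i\<bar> = m"
    using pos by (simp add: f2 composition(2) abs_mult abs_sgn_eq m_def relu_def)
  show "4 * f2 \<theta> e i ^ 3 * df2 W1 \<theta> e i = 4 * sgn (\<theta> W1 i) * m ^ 3 * \<bar>\<theta> W2 i\<bar>"
    unfolding cube f2 df2.simps f1 e mult_1_right composition(5) by simp
  show "4 * f2 \<theta> e i ^ 3 * df2 B1 \<theta> e i = - 4 * m ^ 3 * \<bar>\<theta> W2 i\<bar>"
    unfolding cube f2 df2.simps f1 e mult_1_right composition(6) by simp
  show "4 * f2 \<theta> e i ^ 3 * df2 W2 \<theta> e i = 4 * sgn (\<theta> W2 i) * m ^ 3 * (\<bar>\<theta> W1 i\<bar> - \<theta> B1 i)"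
    unfolding cube f2 df2.simps f1 e mult_1_right composition(3) by simp
  show "4 * f2 \<theta> e i ^ 3 * df2 B2 \<theta> e i = - 4 * m ^ 3"
    unfolding cube f2 df2.simps f1 e mult_1_right composition(4) by simp
qed

section \<open>The reduced four-dimensional flow\<close>

text \<open>\<open>U, P, V, Q\<close> stand for \<open>w\<^sub>1\<^sub>2, b\<^sub>1\<^sub>2, w\<^sub>2\<^sub>2, b\<^sub>2\<^sub>2\<close>; the derivatives are the negated
gradient field of \<open>unit_response_active\<close>, which is only known on the active region.\<close>

locale reduced_flow =
  fixes U P V Q :: "real \<Rightarrow> real" and b0 :: real
  assumes b0_pos: "0 < b0"
    and cont_U: "continuous_on {0..} U" and cont_P: "continuous_on {0..} P"
    and cont_V: "continuous_on {0..} V" and cont_Q: "continuous_on {0..} Q"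
    and deriv_U: "\<And>t. 0 < t \<Longrightarrow> active (U t) (P t) (V t) (Q t) \<Longrightarrow>
      (U has_real_derivative
         - 4 * sgn (U t) * relu (margin (U t) (P t) (V t) (Q t)) ^ 3 * \<bar>V t\<bar>) (at t)"
    and deriv_P: "\<And>t. 0 < t \<Longrightarrow> active (U t) (P t) (V t) (Q t) \<Longrightarrow>
      (P has_real_derivative 4 * relu (margin (U t) (P t) (V t) (Q t)) ^ 3 * \<bar>V t\<bar>) (at t)"
    and deriv_V: "\<And>t. 0 < t \<Longrightarrow> active (U t) (P t) (V t) (Q t) \<Longrightarrow>
      (V has_real_derivative
         - 4 * sgn (V t) * relu (margin (U t) (P t) (V t) (Q t)) ^ 3 * (\<bar>U t\<bar> - P t)) (at t)"
    and deriv_Q: "\<And>t. 0 < t \<Longrightarrow> active (U t) (P t) (V t) (Q t) \<Longrightarrow>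
      (Q has_real_derivative 4 * relu (margin (U t) (P t) (V t) (Q t)) ^ 3) (at t)"
    and init: "P 0 = b0" "Q 0 = b0" "\<bar>V 0\<bar> \<le> sqrt b0" "b0 \<le> \<bar>V 0\<bar> * (\<bar>U 0\<bar> - b0)"
begin

abbreviation is_active :: "real \<Rightarrow> bool" where
  "is_active t \<equiv> active (U t) (P t) (V t) (Q t)"

abbreviation gap :: "real \<Rightarrow> real" where
  "gap t \<equiv> \<bar>U t\<bar> - P t"

abbreviation \<Phi> :: "real \<Rightarrow> real" where
  "\<Phi> t \<equiv> margin (U t) (P t) (V t) (Q t)"

definition invariant :: "real \<Rightarrow> bool" where
  "invariant t \<longleftrightarrow> b0 \<le> P t \<and> b0 \<le> Q t \<and> \<bar>V t\<bar> \<le> sqrt b0 \<and> 0 \<le> \<Phi> t"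

lemma continuous_on_abs_V: "continuous_on {0..} (\<lambda>t. \<bar>V t\<bar>)"
  by (intro continuous_intros cont_V)

lemma continuous_on_gap: "continuous_on {0..} gap"
  by (intro continuous_intros cont_U cont_P)

lemma continuous_on_margin: "continuous_on {0..} \<Phi>"
  unfolding margin_def by (intro continuous_intros cont_U cont_P cont_V cont_Q)

lemma deriv_abs_V:
  assumes "0 < t" "is_active t"
  shows "((\<lambda>s. \<bar>V s\<bar>) has_real_derivative - 4 * relu (\<Phi> t) ^ 3 * gap t) (at t)"
proof -
  have "V t \<noteq> 0"
    using assms(2) by (simp add: active_def)
  then have "sgn (V t) * sgn (V t) = 1"
    by (simp add: sgn_if)
  with has_real_derivative_abs[OF deriv_V[OF assms] \<open>V t \<noteq> 0\<close>] show ?thesis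
    by (rule_tac DERIV_cong) (auto simp: algebra_simps)
qed

lemma deriv_gap:
  assumes "0 < t" "is_active t"
  shows "(gap has_real_derivative - 8 * relu (\<Phi> t) ^ 3 * \<bar>V t\<bar>) (at t)"
proof -
  have "U t \<noteq> 0"
    using assms(2) by (auto simp: active_def)
  then have "sgn (U t) * sgn (U t) = 1"
    by (simp add: sgn_if)
  with DERIV_diff[OF has_real_derivative_abs[OF deriv_U[OF assms] \<open>U t \<noteq> 0\<close>] deriv_P[OF assms]]
  show ?thesis
    by (rule_tac DERIV_cong) (auto simp: algebra_simps)
qed

lemma deriv_margin:
  assumes "0 < t" "is_active t"
  shows "(\<Phi> has_real_derivative
           - 4 * relu (\<Phi> t) ^ 3 * (gap t ^ 2 + 2 * \<bar>V t\<bar> ^ 2 + 1)) (at t)"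
proof -
  have "(- 4 * r * g) * g + (- 8 * r * v) * v - 4 * r = - 4 * r * (g ^ 2 + 2 * v ^ 2 + 1)"
    for r g v :: real
    by (simp add: algebra_simps power2_eq_square)
  with DERIV_diff[OF DERIV_mult[OF deriv_abs_V[OF assms] deriv_gap[OF assms]] deriv_Q[OF assms]]
  show ?thesis
    unfolding margin_def by simp
qed

lemma invariant_imp_active:
  assumes "invariant t"
  shows "is_active t" and "sqrt b0 \<le> gap t"
proof -
  have inv: "b0 \<le> P t" "b0 \<le> Q t" "\<bar>V t\<bar> \<le> sqrt b0" "Q t \<le> \<bar>V t\<bar> * gap t"
    using assms by (auto simp: invariant_def margin_def)
  then have "b0 \<le> \<bar>V t\<bar> * gap t"
    by linarith
  then have "0 < \<bar>V t\<bar> * gap t"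
    using b0_pos by linarith
  then have "0 < \<bar>V t\<bar>" "0 < gap t"
    by (auto simp: zero_less_mult_iff)
  show "sqrt b0 \<le> gap t"
  proof (rule ccontr)
    assume "\<not> sqrt b0 \<le> gap t"
    then have "\<bar>V t\<bar> * gap t < sqrt b0 * sqrt b0"
      using inv(3) \<open>0 < gap t\<close> \<open>0 < \<bar>V t\<bar>\<close> by (intro mult_le_less_imp_less) auto
    then show False
      using \<open>b0 \<le> \<bar>V t\<bar> * gap t\<close> b0_pos by simp
  qed
  show "is_active t"
    using inv b0_pos \<open>0 < \<bar>V t\<bar>\<close> \<open>0 < gap t\<close> by (auto simp: active_def)
qed

lemma invariant_if_active_before:
  assumes "0 \<le> t" and active_before: "\<And>s. 0 < s \<Longrightarrow> s < t \<Longrightarrow> is_active s"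
  shows "invariant t"
proof -
  have nonneg: "0 \<le> relu x" for x
    by (simp add: relu_def)
  have sub: "{0..t} \<subseteq> {0..}"
    by auto
  have "P 0 \<le> P t"
  proof (rule DERIV_nonneg_imp_increasing_open[OF assms(1)])
    fix s assume "0 < s" "s < t"
    then show "\<exists>y. (P has_real_derivative y) (at s) \<and> 0 \<le> y"
      using deriv_P active_before nonneg by (meson abs_ge_zero mult_nonneg_nonneg zero_le_numeral zero_le_power)
  qed (rule continuous_on_subset[OF cont_P sub])
  moreover have "Q 0 \<le> Q t"
  proof (rule DERIV_nonneg_imp_increasing_open[OF assms(1)])
    fix s assume "0 < s" "s < t"
    then show "\<exists>y. (Q has_real_derivative y) (at s) \<and> 0 \<le> y"
      using deriv_Q active_before nonneg by (meson mult_nonneg_nonneg zero_le_numeral zero_le_power)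
  qed (rule continuous_on_subset[OF cont_Q sub])
  moreover have "\<bar>V t\<bar> \<le> \<bar>V 0\<bar>"
  proof (rule DERIV_nonpos_imp_decreasing_open[OF assms(1)])
    fix s assume "0 < s" "s < t"
    then have "0 < gap s"
      using active_before by (simp add: active_def)
    then show "\<exists>y. ((\<lambda>s. \<bar>V s\<bar>) has_real_derivative y) (at s) \<and> y \<le> 0"
      using deriv_abs_V[OF \<open>0 < s\<close> active_before[OF \<open>0 < s\<close> \<open>s < t\<close>]] nonneg
      by (intro exI) (auto simp: mult_nonneg_nonneg)
  qed (rule continuous_on_subset[OF continuous_on_abs_V sub])
  \<comment> \<open>Where the margin is negative the network output vanishes, so the whole flow is frozen.\<close>
  moreover have "0 \<le> \<Phi> t"
  proof (rule nonneg_barrier[OF assms(1) continuous_on_subset[OF continuous_on_margin sub]])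
    show "(\<Phi> has_real_derivative
           - 4 * relu (\<Phi> s) ^ 3 * (gap s ^ 2 + 2 * \<bar>V s\<bar> ^ 2 + 1)) (at s)"
      if "0 < s" "s < t" for s
      using deriv_margin that active_before by blast
  qed (use init in \<open>auto simp: relu_def margin_def\<close>)
  ultimately show ?thesis
    using init by (simp add: invariant_def)
qed

lemma invariant_forever:
  assumes "0 \<le> t"
  shows "invariant t"
proof -
  define m where "m t = min (min (P t) (Q t)) (min \<bar>V t\<bar> (gap t))" for t
  have active_iff: "is_active t \<longleftrightarrow> 0 < m t" for t
    by (auto simp: m_def active_def)
  have "continuous_on {0..} m"
    unfolding m_def by (intro continuous_intros cont_P cont_Q continuous_on_abs_V continuous_on_gap)
  moreover have "0 < m c"
    if "0 \<le> c" "\<And>s. 0 \<le> s \<Longrightarrow> s < c \<Longrightarrow> 0 < m s" for c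
    using invariant_imp_active(1)[OF invariant_if_active_before] that active_iff
    by (meson less_imp_le)
  ultimately have "0 < m s" if "0 \<le> s" for s
    using positive_continuation that by blast
  then show ?thesis
    using invariant_if_active_before[OF assms] active_iff by (meson less_imp_le)
qed

lemma active_forever: "0 \<le> t \<Longrightarrow> is_active t"
  using invariant_forever invariant_imp_active(1) by blast

lemma gap_ge_sqrt: "0 \<le> t \<Longrightarrow> sqrt b0 \<le> gap t"
  using invariant_forever invariant_imp_active(2) by blast

lemma relu_margin_tendsto_0: "((\<lambda>t. relu (\<Phi> t)) \<longlongrightarrow> 0) at_top"
proof -
  have margin_nonneg: "0 \<le> \<Phi> t" if "0 \<le> t" for t
    using invariant_forever[OF that] by (simp add: invariant_def)
  have "(\<Phi> \<longlongrightarrow> 0) at_top"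
  proof (rule tendsto_zero_if_deriv_le_neg_power[OF continuous_on_margin])
    fix t :: real assume "0 < t"
    show "(\<Phi> has_real_derivative
           - 4 * relu (\<Phi> t) ^ 3 * (gap t ^ 2 + 2 * \<bar>V t\<bar> ^ 2 + 1)) (at t)"
      using deriv_margin[OF \<open>0 < t\<close> active_forever] \<open>0 < t\<close> by simp
    have relu: "relu (\<Phi> t) = \<Phi> t"
      using margin_nonneg[of t] \<open>0 < t\<close> by (simp add: relu_def)
    have "0 \<le> \<Phi> t ^ 3"
      using margin_nonneg[of t] \<open>0 < t\<close> by simp
    then have "\<Phi> t ^ 3 * 1 \<le> 4 * \<Phi> t ^ 3 * (gap t ^ 2 + 2 * \<bar>V t\<bar> ^ 2 + 1)"
      by (intro mult_mono) auto
    then show "- 4 * relu (\<Phi> t) ^ 3 * (gap t ^ 2 + 2 * \<bar>V t\<bar> ^ 2 + 1) \<le> - (\<Phi> t ^ 3)"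
      unfolding relu by simp
  qed (use margin_nonneg in auto)
  then show ?thesis
    by (rule tendsto_cong[THEN iffD1, rotated])
       (auto simp: relu_def margin_nonneg intro: eventually_mono[OF eventually_ge_at_top[of 0]])
qed

end

section \<open>Gradient flow of the contrastive loss\<close>

lemma gradient_flow_coord_deriv:
  assumes flow: "\<forall>p. \<forall>k<d. \<forall>t\<ge>0.
       ((\<lambda>s. \<theta> s p k) has_real_derivative (- grad_CL d \<alpha> \<phi> (\<theta> t) p k)) (at t within {0..})"
    and "\<alpha> i = 1" "\<phi> i = 1" "i < d" "0 < t"
  shows "((\<lambda>s. \<theta> s p i) has_real_derivative
           - (4 * f2 (\<theta> t) (indicator {i}) i ^ 3 * df2 p (\<theta> t) (indicator {i}) i)) (at t)"
proof -
  have "((\<lambda>s. \<theta> s p i) has_real_derivative - grad_CL d \<alpha> \<phi> (\<theta> t) p i) (at t within {0..})"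
    using flow assms(4,5) by simp
  then have "((\<lambda>s. \<theta> s p i) has_real_derivative - grad_CL d \<alpha> \<phi> (\<theta> t) p i) (at t within {0<..})"
    by (rule has_field_derivative_subset) auto
  then show ?thesis
    using at_within_open[of t "{0<..}"] assms(5)
    by (simp add: grad_CL_resampled_coord[of \<alpha> i \<phi> d, OF assms(2-4)])
qed

lemma reduced_flow_of_gradient_flow:
  assumes flow: "\<forall>p. \<forall>k<d. \<forall>t\<ge>0.
       ((\<lambda>s. \<theta> s p k) has_real_derivative (- grad_CL d \<alpha> \<phi> (\<theta> t) p k)) (at t within {0..})"
    and coord: "\<alpha> i = 1" "\<phi> i = 1" "i < d"
    and "0 < b0" "\<theta> 0 B1 i = b0" "\<theta> 0 B2 i = b0" "\<bar>\<theta> 0 W2 i\<bar> \<le> sqrt b0"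
    and "b0 \<le> \<bar>\<theta> 0 W2 i\<bar> * (\<bar>\<theta> 0 W1 i\<bar> - b0)"
  shows "reduced_flow (\<lambda>t. \<theta> t W1 i) (\<lambda>t. \<theta> t B1 i) (\<lambda>t. \<theta> t W2 i) (\<lambda>t. \<theta> t B2 i) b0"
proof -
  have cont: "continuous_on {0..} (\<lambda>s. \<theta> s p i)" for p
    using flow coord(3) by (intro DERIV_continuous_on) blast
  note deriv = gradient_flow_coord_deriv[OF flow coord]
  show ?thesis
  proof unfold_locales
    fix t assume "0 < t" and act: "active (\<theta> t W1 i) (\<theta> t B1 i) (\<theta> t W2 i) (\<theta> t B2 i)"
    note field = unit_response_active[where \<theta> = "\<theta> t" and i = i, OF act]
    show "((\<lambda>t. \<theta> t W1 i) has_real_derivative - 4 * sgn (\<theta> t W1 i)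
        * relu (margin (\<theta> t W1 i) (\<theta> t B1 i) (\<theta> t W2 i) (\<theta> t B2 i)) ^ 3 * \<bar>\<theta> t W2 i\<bar>) (at t)"
      using deriv[OF \<open>0 < t\<close>, of W1] unfolding field(3) by simp
    show "((\<lambda>t. \<theta> t B1 i) has_real_derivative 4
        * relu (margin (\<theta> t W1 i) (\<theta> t B1 i) (\<theta> t W2 i) (\<theta> t B2 i)) ^ 3 * \<bar>\<theta> t W2 i\<bar>) (at t)"
      using deriv[OF \<open>0 < t\<close>, of B1] unfolding field(4) by simp
    show "((\<lambda>t. \<theta> t W2 i) has_real_derivative - 4 * sgn (\<theta> t W2 i)
        * relu (margin (\<theta> t W1 i) (\<theta> t B1 i) (\<theta> t W2 i) (\<theta> t B2 i)) ^ 3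
        * (\<bar>\<theta> t W1 i\<bar> - \<theta> t B1 i)) (at t)"
      using deriv[OF \<open>0 < t\<close>, of W2] unfolding field(5) by simp
    show "((\<lambda>t. \<theta> t B2 i) has_real_derivative 4
        * relu (margin (\<theta> t W1 i) (\<theta> t B1 i) (\<theta> t W2 i) (\<theta> t B2 i)) ^ 3) (at t)"
      using deriv[OF \<open>0 < t\<close>, of B2] unfolding field(6) by simp
  qed (use assms cont in simp_all)
qed

lemma norm_d_eq_abs_single:
  assumes "i < d" "\<And>j. j \<noteq> i \<Longrightarrow> h j = 0"
  shows "norm_d d h = \<bar>h i\<bar>"
proof -
  have "(\<Sum>j<d. (h j)\<^sup>2) = (\<Sum>j<d. if j = i then (h i)\<^sup>2 else 0)"
    using assms(2) by (intro sum.cong) auto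
  also have "\<dots> = (h i)\<^sup>2"
    using assms(1) by simp
  finally show ?thesis
    by (simp add: norm_d_def)
qed

lemma f1_indicator_other: "j \<noteq> i \<Longrightarrow> f1 \<theta> (indicator {i}) j = 0"
  by (simp add: f1_def srelu_def)

lemma f2_indicator_other: "j \<noteq> i \<Longrightarrow> f2 \<theta> (indicator {i}) j = 0"
  by (simp add: f2_def f1_indicator_other srelu_def)

lemma norm_d_unit_response:
  assumes "i < d"
  shows "norm_d d (f1 \<theta> (indicator {i})) = \<bar>f1 \<theta> (indicator {i}) i\<bar>"
    and "norm_d d (f2 \<theta> (indicator {i})) = \<bar>f2 \<theta> (indicator {i}) i\<bar>"
  by (rule norm_d_eq_abs_single[OF assms], simp add: f1_indicator_other f2_indicator_other)+

theorem theorem3p8: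
  fixes d :: nat and \<alpha> \<phi> :: "nat \<Rightarrow> real" and b0 :: real
    and \<theta> :: "real \<Rightarrow> params"
  assumes d2: "d \<ge> 2"
    and phi_pos: "\<forall>i<d. \<phi> i > 0"
    and phi12: "\<phi> 0 = 1" "\<phi> 1 = 1"
    and alpha_range: "\<forall>i<d. 0 \<le> \<alpha> i \<and> \<alpha> i \<le> 1"
    and alpha12: "\<alpha> 0 = 0" "\<alpha> 1 = 1"
    and flow: "\<forall>p. \<forall>k<d. \<forall>t\<ge>0.
       ((\<lambda>s. \<theta> s p k) has_real_derivative (- grad_CL d \<alpha> \<phi> (\<theta> t) p k)) (at t within {0..})"
    and b0_pos: "b0 > 0"
    and init_b: "\<forall>k<d. \<theta> 0 B1 k = b0 \<and> \<theta> 0 B2 k = b0"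
    and init_w22: "\<bar>\<theta> 0 W2 1\<bar> \<le> sqrt b0"
    and init_w12: "\<bar>\<theta> 0 W2 1\<bar> * (\<bar>\<theta> 0 W1 1\<bar> - b0) \<ge> b0"
  shows "((\<lambda>t. norm_d d (f2 (\<theta> t) e2)) \<longlongrightarrow> 0) at_top
         \<and> Liminf at_top (\<lambda>t. ereal (norm_d d (f1 (\<theta> t) e2))) \<ge> ereal (sqrt b0)"
proof -
  have "1 < d"
    using d2 by simp
  have e2: "e2 = indicator {1}"
    by (auto simp: e2_def indicator_def)
  interpret reduced_flow "\<lambda>t. \<theta> t W1 1" "\<lambda>t. \<theta> t B1 1" "\<lambda>t. \<theta> t W2 1" "\<lambda>t. \<theta> t B2 1" b0
    using reduced_flow_of_gradient_flow[OF flow alpha12(2) phi12(2) \<open>1 < d\<close>] init_b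
      b0_pos init_w22 init_w12 \<open>1 < d\<close> by blast
  have response: "norm_d d (f1 (\<theta> t) e2) = \<bar>\<theta> t W1 1\<bar> - \<theta> t B1 1"
      "norm_d d (f2 (\<theta> t) e2) = relu (\<Phi> t)" if "0 \<le> t" for t
    using unit_response_active(1,2)[where \<theta> = "\<theta> t", OF active_forever[OF that]]
      norm_d_unit_response[OF \<open>1 < d\<close>] by (simp_all add: e2)
  have "\<forall>\<^sub>F t in at_top. relu (\<Phi> t) = norm_d d (f2 (\<theta> t) e2)"
    using eventually_ge_at_top[of 0] by (rule eventually_mono) (simp add: response)
  then have "((\<lambda>t. norm_d d (f2 (\<theta> t) e2)) \<longlongrightarrow> 0) at_top"
    using relu_margin_tendsto_0 by (rule tendsto_cong[THEN iffD1])
  moreover have "Liminf at_top (\<lambda>t. ereal (norm_d d (f1 (\<theta> t) e2))) \<ge> ereal (sqrt b0)"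
    by (intro Liminf_bounded eventually_mono[OF eventually_ge_at_top[of 0]])
       (simp only: ereal_less_eq(3) response gap_ge_sqrt)
  ultimately show ?thesis ..
qed

end
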